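(* Let $Q(z)$ be a $k\times k$ unimodular Hermite matrix of Laurent polynomials ($k\ge2$) whose $(1,1)$-entry $Q_{1,1}(z)$ is identically zero. Then there exist a $k\times k$ unimodular matrix $U(z)$ of Laurent polynomials and a $(k-1)\times(k-1)$ matrix $\widetilde Q(z)$ of Laurent polynomials such that $$Q(z)=U(z)\begin{bmatrix}1&\\&\widetilde Q(z)\end{bmatrix}U^\star(z).$$
   Context: For a matrix $U(z)=\sum_k U_k z^k$ of Laurent polynomials, $U^\star(z):=\sum_k\overline{U_k}^T z^{-k}$; Hermite means $A^\star=A$. A square matrix of Laurent polynomials is unimodular if its determinant is a nonzero monomial $cz^m$ ($c\ne0$, $m\in\mathbb{Z}$). *)

theory Defs
  imports "HOL-Computational_Algebra.Formal_Laurent_Series" "Jordan_Normal_Form.Determinant"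
begin

no_notation fls_nth (infixl \<open>$$\<close> 75)

text \<open>Laurent polynomials over the complex numbers are represented as formal Laurent
  series (type complex fls) with only finitely many nonzero coefficients.\<close>

definition laurent_poly :: "complex fls \<Rightarrow> bool" where
  "laurent_poly f \<longleftrightarrow> finite {n. fls_nth f n \<noteq> 0}"

definition lstar :: "complex fls \<Rightarrow> complex fls" where
  "lstar f = Abs_fls (\<lambda>n. cnj (fls_nth f (- n)))"

definition laurent_mat :: "complex fls mat \<Rightarrow> bool" where
  "laurent_mat A \<longleftrightarrow> (\<forall>i<dim_row A. \<forall>j<dim_col A. laurent_poly (A $$ (i, j)))"

definition mat_star :: "complex fls mat \<Rightarrow> complex fls mat" where
  "mat_star A = mat (dim_col A) (dim_row A) (\<lambda>(i, j). lstar (A $$ (j, i)))"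

definition hermite_lmat :: "complex fls mat \<Rightarrow> bool" where
  "hermite_lmat A \<longleftrightarrow> mat_star A = A"

definition unimodular_lmat :: "complex fls mat \<Rightarrow> bool" where
  "unimodular_lmat A \<longleftrightarrow> dim_row A = dim_col A \<and> laurent_mat A \<and>
     (\<exists>c::complex. \<exists>m::int. c \<noteq> 0 \<and> det A = fls_const c * fls_X_intpow m)"

end

theory Submission
  imports Defs
begin

text \<open>Because \<open>det Q\<close> is a monomial, \<open>R = Q\<^sup>-\<^sup>1\<close> is again a Hermite matrix of Laurent
  polynomials. As \<open>Q\<^sub>0\<^sub>0 = 0\<close>, the vector \<open>m = e\<^sub>0 + t Q e\<^sub>0\<close> with \<open>t = (1 - R\<^sub>0\<^sub>0) / 2\<close>
  has \<open>m\<^sub>0 = 1\<close> and \<open>m\<^sup>* R m = R\<^sub>0\<^sub>0 + 2t + t\<^sup>2 Q\<^sub>0\<^sub>0 = 1\<close>. Two transvections complete \<open>m\<close>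
  to a matrix \<open>M\<close> of determinant 1 whose inverse has first row \<open>m\<^sup>* R\<close>; then the Hermite
  matrix \<open>M\<^sup>* R M\<close> has first row \<open>e\<^sub>0\<^sup>T\<close>, hence equals \<open>diag(1, Qt)\<close>. Finally
  \<open>Q = Q R Q = U diag(1, Qt) U\<^sup>*\<close> with \<open>U = Q M\<^sup>-\<^sup>*\<close>, and \<open>det U = det Q\<close>.\<close>

section \<open>Laurent polynomials and para-conjugation\<close>

lemma laurent_poly_0[simp]: "laurent_poly 0" by (simp add: laurent_poly_def)

lemma laurent_poly_const[simp]: "laurent_poly (fls_const c)"
  unfolding laurent_poly_def by (rule finite_subset[of _ "{0}"]) auto

lemma laurent_poly_1[simp]: "laurent_poly 1"
  using laurent_poly_const[of 1] by simp

lemma laurent_poly_shift[simp]: "laurent_poly f \<Longrightarrow> laurent_poly (fls_shift m f)"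
proof -
  assume f: "laurent_poly f"
  have "{n. fls_nth (fls_shift m f) n \<noteq> 0} = (\<lambda>x. x + m) -` {n. fls_nth f n \<noteq> 0}" by auto
  moreover have "finite ((\<lambda>x. x + m) -` {n. fls_nth f n \<noteq> 0})"
    using f unfolding laurent_poly_def by (intro finite_vimageI) (auto simp: inj_on_def)
  ultimately show ?thesis unfolding laurent_poly_def by simp
qed

lemma laurent_poly_add[simp]: "laurent_poly f \<Longrightarrow> laurent_poly g \<Longrightarrow> laurent_poly (f + g)"
  unfolding laurent_poly_def
  by (rule finite_subset[of _ "{n. fls_nth f n \<noteq> 0} \<union> {n. fls_nth g n \<noteq> 0}"]) auto

lemma laurent_poly_uminus[simp]: "laurent_poly f \<Longrightarrow> laurent_poly (- f)"
  unfolding laurent_poly_def by simp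

lemma laurent_poly_diff[simp]: "laurent_poly f \<Longrightarrow> laurent_poly g \<Longrightarrow> laurent_poly (f - g)"
  using laurent_poly_add[of f "-g"] by simp

lemma fls_times_nth_supp:
  fixes f g :: "'a::semiring_0 fls"
  assumes S: "finite S" "{i. fls_nth f i \<noteq> 0} \<subseteq> S"
  shows "fls_nth (f*g) n = (\<Sum>i\<in>S. fls_nth f i * fls_nth g (n-i))"
proof -
  define df where "df = fls_subdegree f"
  define dg where "dg = fls_subdegree g"
  have f_zero: "fls_nth f i = 0" if "i \<notin> S" for i
    using S(2) that by blast
  have term_zero: "fls_nth f i * fls_nth g (n - i) = 0" if i: "i \<notin> {df..n - dg}" for i
  proof (cases "fls_nth f i = 0")
    case False
    then have "df \<le> i" unfolding df_def by (rule fls_subdegree_leI)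
    with i have "n - i < dg" by auto
    then show ?thesis unfolding dg_def using fls_eq0_below_subdegree[of "n-i" g] by simp
  qed simp
  have "fls_nth (f*g) n = (\<Sum>i=df..n - dg. fls_nth f i * fls_nth g (n - i))"
    unfolding df_def dg_def by (rule fls_times_nth(2))
  also have "\<dots> = (\<Sum>i\<in>S \<union> {df..n-dg}. fls_nth f i * fls_nth g (n - i))"
    by (rule sum.mono_neutral_left) (use S term_zero in auto)
  also have "\<dots> = (\<Sum>i\<in>S. fls_nth f i * fls_nth g (n - i))"
    by (rule sum.mono_neutral_right) (use S in \<open>auto simp: f_zero\<close>)
  finally show ?thesis .
qed

lemma laurent_poly_mult[simp]:
  assumes f: "laurent_poly f" and g: "laurent_poly g"
  shows "laurent_poly (f * g)"
proof -
  let ?S = "{n. fls_nth f n \<noteq> 0}" and ?T = "{n. fls_nth g n \<noteq> 0}"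
  have "{n. fls_nth (f*g) n \<noteq> 0} \<subseteq> (\<lambda>(i,j). i + j) ` (?S \<times> ?T)"
  proof
    fix n assume "n \<in> {n. fls_nth (f*g) n \<noteq> 0}"
    then have "(\<Sum>i\<in>?S. fls_nth f i * fls_nth g (n-i)) \<noteq> 0"
      using fls_times_nth_supp[of ?S f g n] f by (simp add: laurent_poly_def)
    then obtain i where "i \<in> ?S" "fls_nth f i * fls_nth g (n-i) \<noteq> 0"
      by (meson sum.neutral)
    then have "(i, n - i) \<in> ?S \<times> ?T" by auto
    then show "n \<in> (\<lambda>(i,j). i + j) ` (?S \<times> ?T)" by force
  qed
  moreover have "finite ((\<lambda>(i,j). i + j) ` (?S \<times> ?T))"
    using f g by (simp add: laurent_poly_def)
  ultimately show ?thesis unfolding laurent_poly_def by (rule finite_subset)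
qed

lemma laurent_poly_sum[simp]: "(\<And>x. x \<in> A \<Longrightarrow> laurent_poly (f x)) \<Longrightarrow> laurent_poly (\<Sum>x\<in>A. f x)"
  by (induction A rule: infinite_finite_induct) auto

lemma laurent_poly_prod[simp]: "(\<And>x. x \<in> A \<Longrightarrow> laurent_poly (f x)) \<Longrightarrow> laurent_poly (\<Prod>x\<in>A. f x)"
  by (induction A rule: infinite_finite_induct) auto

lemma laurent_poly_power[simp]: "laurent_poly f \<Longrightarrow> laurent_poly (f ^ n)"
  by (induction n) auto

lemma lstar_nth:
  assumes "laurent_poly f"
  shows "fls_nth (lstar f) n = cnj (fls_nth f (- n))"
proof -
  have "finite {n::nat. cnj (fls_nth f (- (- int n))) \<noteq> 0}"
  proof -
    have "{n::nat. cnj (fls_nth f (- (- int n))) \<noteq> 0} = int -` {n. fls_nth f n \<noteq> 0}" by auto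
    moreover have "finite (int -` {n. fls_nth f n \<noteq> 0})"
      using assms unfolding laurent_poly_def by (intro finite_vimageI) (auto simp: inj_on_def)
    ultimately show ?thesis by simp
  qed
  then show ?thesis unfolding lstar_def
    by (subst nth_Abs_fls_finite_nonzero_neg_nth) auto
qed

lemma laurent_poly_lstar[simp]: "laurent_poly f \<Longrightarrow> laurent_poly (lstar f)"
proof -
  assume f: "laurent_poly f"
  have "{n. fls_nth (lstar f) n \<noteq> 0} = uminus ` {n. fls_nth f n \<noteq> 0}"
    using f by (force simp: lstar_nth)
  then show ?thesis using f unfolding laurent_poly_def by simp
qed

lemma lstar_lstar[simp]: "laurent_poly f \<Longrightarrow> lstar (lstar f) = f"
  by (intro fls_eqI) (simp add: lstar_nth)

lemma lstar_add[simp]: "laurent_poly f \<Longrightarrow> laurent_poly g \<Longrightarrow> lstar (f + g) = lstar f + lstar g"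
  by (intro fls_eqI) (simp add: lstar_nth)

lemma lstar_diff[simp]: "laurent_poly f \<Longrightarrow> laurent_poly g \<Longrightarrow> lstar (f - g) = lstar f - lstar g"
  by (intro fls_eqI) (simp add: lstar_nth)

lemma lstar_const[simp]: "lstar (fls_const c) = fls_const (cnj c)"
  by (intro fls_eqI) (simp add: lstar_nth)

lemma lstar_0[simp]: "lstar 0 = 0"
  using lstar_const[of 0] by simp

lemma lstar_1[simp]: "lstar 1 = 1"
  using lstar_const[of 1] by simp

lemma lstar_mult[simp]:
  assumes f: "laurent_poly f" and g: "laurent_poly g"
  shows "lstar (f * g) = lstar f * lstar g"
proof (rule fls_eqI)
  fix n
  let ?S = "{n. fls_nth f n \<noteq> 0}"
  have S: "finite ?S" using f by (simp add: laurent_poly_def)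
  have e: "\<And>x::int. - x - n = - n - x" by simp
  have U: "{j. fls_nth (lstar f) j \<noteq> 0} \<subseteq> uminus ` ?S"
  proof
    fix j assume "j \<in> {j. fls_nth (lstar f) j \<noteq> 0}"
    then have "-j \<in> ?S" using f by (simp add: lstar_nth)
    then show "j \<in> uminus ` ?S" by (metis image_eqI minus_minus)
  qed
  have "fls_nth (lstar (f * g)) n = cnj (\<Sum>i\<in>?S. fls_nth f i * fls_nth g (- n - i))"
    using f g by (simp add: lstar_nth fls_times_nth_supp[OF S])
  also have "\<dots> = (\<Sum>i\<in>?S. cnj (fls_nth f i) * cnj (fls_nth g (- n - i)))"
    by simp
  also have "\<dots> = (\<Sum>j\<in>uminus ` ?S. fls_nth (lstar f) j * fls_nth (lstar g) (n - j))"
    using f g by (subst sum.reindex) (auto simp: lstar_nth inj_on_def e intro!: sum.cong)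
  also have "\<dots> = fls_nth (lstar f * lstar g) n"
    using f S U by (subst fls_times_nth_supp[of "uminus ` ?S"]) (auto simp: lstar_nth)
  finally show "fls_nth (lstar (f * g)) n = fls_nth (lstar f * lstar g) n" .
qed

lemma lstar_sum: "(\<And>x. x \<in> A \<Longrightarrow> laurent_poly (f x)) \<Longrightarrow> lstar (\<Sum>x\<in>A. f x) = (\<Sum>x\<in>A. lstar (f x))"
  by (induction A rule: infinite_finite_induct) auto

section \<open>Matrices of Laurent polynomials\<close>

lemma mat_star_dim[simp]: "dim_row (mat_star A) = dim_col A" "dim_col (mat_star A) = dim_row A"
  by (simp_all add: mat_star_def)

lemma mat_star_carrier[simp]: "A \<in> carrier_mat n m \<Longrightarrow> mat_star A \<in> carrier_mat m n"
  by (metis carrier_matD carrier_matI mat_star_dim)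

lemma mat_star_index[simp]: "i < dim_col A \<Longrightarrow> j < dim_row A \<Longrightarrow> mat_star A $$ (i,j) = lstar (A $$ (j,i))"
  by (simp add: mat_star_def)

lemma laurent_matD: "laurent_mat A \<Longrightarrow> i < dim_row A \<Longrightarrow> j < dim_col A \<Longrightarrow> laurent_poly (A $$ (i,j))"
  by (simp add: laurent_mat_def)

lemma laurent_matI: "(\<And>i j. i < dim_row A \<Longrightarrow> j < dim_col A \<Longrightarrow> laurent_poly (A $$ (i,j))) \<Longrightarrow> laurent_mat A"
  by (simp add: laurent_mat_def)

lemma laurent_mat_star[simp]: "laurent_mat A \<Longrightarrow> laurent_mat (mat_star A)"
  by (rule laurent_matI) (auto dest: laurent_matD)

lemma mat_star_star[simp]: "laurent_mat A \<Longrightarrow> mat_star (mat_star A) = A"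
  by (rule eq_matI) (auto dest: laurent_matD)

lemma laurent_mat_mult[simp]:
  assumes "laurent_mat A" "laurent_mat B" "dim_col A = dim_row B"
  shows "laurent_mat (A * B)"
proof (rule laurent_matI)
  fix i j assume i: "i < dim_row (A * B)" and j: "j < dim_col (A * B)"
  have L: "laurent_poly (A $$ (i,k) * B $$ (k,j))" if "k \<in> {0..<dim_row B}" for k
    using assms i j that by (auto intro!: laurent_poly_mult intro: laurent_matD)
  have "(A * B) $$ (i,j) = (\<Sum>k\<in>{0..<dim_row B}. A $$ (i,k) * B $$ (k,j))"
    using i j assms by (simp add: scalar_prod_def)
  moreover have "laurent_poly (\<Sum>k\<in>{0..<dim_row B}. A $$ (i,k) * B $$ (k,j))"
    by (rule laurent_poly_sum) (rule L)
  ultimately show "laurent_poly ((A * B) $$ (i,j))" by simp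
qed

lemma mat_star_mult:
  assumes A: "laurent_mat A" and B: "laurent_mat B" and d: "dim_col A = dim_row B"
  shows "mat_star (A * B) = mat_star B * mat_star A"
proof (rule eq_matI)
  fix i j assume i: "i < dim_row (mat_star B * mat_star A)" and j: "j < dim_col (mat_star B * mat_star A)"
  have LA: "laurent_poly (A $$ (j,k))" if "k \<in> {0..<dim_row B}" for k
    using A d i j that by (auto intro: laurent_matD)
  have LB: "laurent_poly (B $$ (k,i))" if "k \<in> {0..<dim_row B}" for k
    using B d i j that by (auto intro: laurent_matD)
  have "mat_star (A * B) $$ (i, j) = lstar (\<Sum>k\<in>{0..<dim_row B}. A $$ (j,k) * B $$ (k,i))"
    using i j d by (simp add: scalar_prod_def)
  also have "\<dots> = (\<Sum>k\<in>{0..<dim_row B}. lstar (A $$ (j,k) * B $$ (k,i)))"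
    by (rule lstar_sum) (use LA LB in auto)
  also have "\<dots> = (\<Sum>k\<in>{0..<dim_row B}. lstar (B $$ (k,i)) * lstar (A $$ (j,k)))"
    by (rule sum.cong) (use LA LB in \<open>auto simp: mult.commute\<close>)
  also have "\<dots> = (mat_star B * mat_star A) $$ (i, j)"
    using i j d by (simp add: scalar_prod_def)
  finally show "mat_star (A * B) $$ (i, j) = (mat_star B * mat_star A) $$ (i, j)" .
qed auto

lemma mat_star_one[simp]: "mat_star (1\<^sub>m n) = 1\<^sub>m n"
  by (rule eq_matI) auto

lemma laurent_mat_smult[simp]: "laurent_poly a \<Longrightarrow> laurent_mat A \<Longrightarrow> laurent_mat (a \<cdot>\<^sub>m A)"
  by (rule laurent_matI) (auto dest: laurent_matD)

lemma laurent_poly_signof[simp]: "laurent_poly (signof p)"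
  by (simp add: sign_def)

lemma laurent_det[simp]:
  assumes A: "laurent_mat A" shows "laurent_poly (det A)"
proof (cases "dim_row A = dim_col A")
  case True
  have "laurent_poly (signof p * (\<Prod>i = 0..<dim_row A. A $$ (i, p i)))"
    if p: "p permutes {0..<dim_row A}" for p
  proof -
    have "laurent_poly (A $$ (i, p i))" if i: "i \<in> {0..<dim_row A}" for i
    proof -
      have "p i \<in> {0..<dim_row A}" using permutes_in_image[OF p] i by simp
      then show ?thesis using i True A by (auto intro: laurent_matD)
    qed
    then show ?thesis by (intro laurent_poly_mult laurent_poly_prod laurent_poly_signof)
  qed
  then show ?thesis unfolding det_def using True by (auto intro: laurent_poly_sum)
qed (simp add: det_def)

lemma laurent_mat_delete[simp]: "laurent_mat A \<Longrightarrow> laurent_mat (mat_delete A i j)"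
  by (rule laurent_matI) (auto simp: mat_delete_def intro!: laurent_matD)

lemma laurent_adj[simp]: "laurent_mat A \<Longrightarrow> laurent_mat (adj_mat A)"
  by (rule laurent_matI) (auto simp: adj_mat_def cofactor_def)

lemma hermite_lmat_index:
  "hermite_lmat A \<Longrightarrow> A \<in> carrier_mat k k \<Longrightarrow> i < k \<Longrightarrow> j < k \<Longrightarrow> lstar (A $$ (i, j)) = A $$ (j, i)"
  using mat_star_index[of j A i] by (simp add: hermite_lmat_def)

lemma mult_eq_one_mat_index:
  assumes "A * B = 1\<^sub>m k" "A \<in> carrier_mat k k" "B \<in> carrier_mat k k" "i < k" "j < k"
  shows "(\<Sum>a = 0..<k. A $$ (i, a) * B $$ (a, j)) = (if i = j then 1 else 0)"
  using assms index_mult_mat(1)[of i A j B] by (simp add: scalar_prod_def)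

lemma unimodular_lmat_inverse:
  assumes A: "A \<in> carrier_mat k k" and U: "unimodular_lmat A"
  obtains R where "R \<in> carrier_mat k k" "laurent_mat R" "A * R = 1\<^sub>m k" "R * A = 1\<^sub>m k"
proof -
  obtain c m where c: "c \<noteq> 0" and det: "det A = fls_const c * fls_X_intpow m"
    using U by (auto simp: unimodular_lmat_def)
  define d where "d = fls_const (1 / c) * fls_X_intpow (- m)"
  have "d * det A = (fls_const (1 / c) * fls_const c) * (fls_X_intpow (- m) * fls_X_intpow m)"
    by (simp add: d_def det ac_simps)
  also have "\<dots> = 1" using c by (simp add: fls_X_intpow_times_conv_shift)
  finally have d: "d * det A = 1" .
  have adj: "adj_mat A \<in> carrier_mat k k" using adj_mat(1)[OF A] .
  have "A * (d \<cdot>\<^sub>m adj_mat A) = d \<cdot>\<^sub>m (det A \<cdot>\<^sub>m 1\<^sub>m k)"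
    using mult_smult_distrib[OF A adj] adj_mat(2)[OF A] by simp
  moreover have "d \<cdot>\<^sub>m adj_mat A * A = d \<cdot>\<^sub>m (det A \<cdot>\<^sub>m 1\<^sub>m k)"
    using mult_smult_assoc_mat[OF adj A] adj_mat(3)[OF A] by simp
  moreover have "d \<cdot>\<^sub>m (det A \<cdot>\<^sub>m 1\<^sub>m k) = 1\<^sub>m k"
    by (rule eq_matI) (auto simp: d mult.assoc[symmetric])
  moreover have "laurent_mat (d \<cdot>\<^sub>m adj_mat A)"
    using U by (simp add: d_def unimodular_lmat_def)
  ultimately show thesis using adj by (intro that[of "d \<cdot>\<^sub>m adj_mat A"]) simp_all
qed

lemma hermite_lmat_inverse:
  assumes A: "A \<in> carrier_mat k k" "laurent_mat A" "hermite_lmat A"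
    and R: "R \<in> carrier_mat k k" "laurent_mat R" and AR: "A * R = 1\<^sub>m k"
  shows "hermite_lmat R"
proof -
  have "mat_star R * A = mat_star (A * R)"
    using A R mat_star_mult[of A R] by (simp add: hermite_lmat_def)
  then have RA: "mat_star R * A = 1\<^sub>m k" using AR by simp
  have "mat_star R = mat_star R * (A * R)" using AR R by simp
  also have "\<dots> = R" using A R RA by (simp flip: assoc_mult_mat[of _ k k _ k _ k])
  finally show ?thesis by (simp add: hermite_lmat_def)
qed

section \<open>Transvections in the first row and column\<close>

definition col_transvection :: "nat \<Rightarrow> (nat \<Rightarrow> 'a::comm_ring_1) \<Rightarrow> 'a mat" where
  "col_transvection k v = mat k k (\<lambda>(i, j). (if i = j then 1 else 0) + (if j = 0 then v i else 0))"

definition row_transvection :: "nat \<Rightarrow> (nat \<Rightarrow> 'a::comm_ring_1) \<Rightarrow> 'a mat" where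
  "row_transvection k w = mat k k (\<lambda>(i, j). (if i = j then 1 else 0) + (if i = 0 then w j else 0))"

lemma col_transvection_dim[simp]:
  "dim_row (col_transvection k v) = k" "dim_col (col_transvection k v) = k"
  by (simp_all add: col_transvection_def)

lemma row_transvection_dim[simp]:
  "dim_row (row_transvection k w) = k" "dim_col (row_transvection k w) = k"
  by (simp_all add: row_transvection_def)

lemma col_transvection_carrier[simp]: "col_transvection k v \<in> carrier_mat k k"
  by (rule carrier_matI) simp_all

lemma row_transvection_carrier[simp]: "row_transvection k w \<in> carrier_mat k k"
  by (rule carrier_matI) simp_all

lemma mult_if_zero: "(if b then x else 0) * y = (if b then x * y else (0::'a::mult_zero))"
  "y * (if b then x else 0) = (if b then y * x else (0::'a::mult_zero))" by auto

lemma col_transvection_inverse: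
  "v 0 = 0 \<Longrightarrow> col_transvection k v * col_transvection k (\<lambda>i. - v i) = 1\<^sub>m k"
  by (rule eq_matI)
    (auto simp: col_transvection_def scalar_prod_def ring_distribs sum.distrib sum_subtractf sum_negf mult_if_zero)

lemma row_transvection_inverse:
  "w 0 = 0 \<Longrightarrow> row_transvection k (\<lambda>j. - w j) * row_transvection k w = 1\<^sub>m k"
  by (rule eq_matI)
    (auto simp: row_transvection_def scalar_prod_def ring_distribs sum.distrib sum_subtractf sum_negf mult_if_zero)

lemma col_row_transvection_index:
  assumes "i < k" "j < k"
  shows "(col_transvection k v * row_transvection k w) $$ (i, j)
    = (if i = j then 1 else 0) + (if j = 0 then v i else 0) + (if i = 0 then w j else 0) + v i * w j"
  using assms by (auto simp: col_transvection_def row_transvection_def scalar_prod_def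
        ring_distribs sum.distrib mult_if_zero)

lemma prod_list_diag_one:
  assumes "\<And>i. i < dim_row A \<Longrightarrow> A $$ (i,i) = (1::'a::monoid_mult)"
  shows "prod_list (diag_mat A) = 1"
proof -
  have "diag_mat A = map (\<lambda>i. 1) [0..<dim_row A]"
    unfolding diag_mat_def using assms by (intro map_cong) auto
  then show ?thesis by (simp add: map_replicate_const)
qed

lemma det_col_transvection: "v 0 = 0 \<Longrightarrow> det (col_transvection k v) = 1"
  by (subst det_lower_triangular[of k]) (auto simp: col_transvection_def intro: prod_list_diag_one)

lemma det_row_transvection: "w 0 = 0 \<Longrightarrow> det (row_transvection k w) = 1"
  by (subst det_upper_triangular[of _ k])
    (auto simp: row_transvection_def upper_triangular_def intro: prod_list_diag_one)

lemma laurent_mat_col_transvection: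
  "(\<And>i. i < k \<Longrightarrow> laurent_poly (v i)) \<Longrightarrow> laurent_mat (col_transvection k v)"
  by (rule laurent_matI) (auto simp: col_transvection_def)

lemma laurent_mat_row_transvection:
  "(\<And>j. j < k \<Longrightarrow> laurent_poly (w j)) \<Longrightarrow> laurent_mat (row_transvection k w)"
  by (rule laurent_matI) (auto simp: row_transvection_def)

lemma mat_star_col_transvection:
  "(\<And>i. i < k \<Longrightarrow> laurent_poly (v i)) \<Longrightarrow>
    mat_star (col_transvection k v) = row_transvection k (\<lambda>j. lstar (v j))"
  by (rule eq_matI) (auto simp: col_transvection_def row_transvection_def)

lemma mat_star_row_transvection:
  "(\<And>j. j < k \<Longrightarrow> laurent_poly (w j)) \<Longrightarrow>
    mat_star (row_transvection k w) = col_transvection k (\<lambda>i. lstar (w i))"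
  by (rule eq_matI) (auto simp: col_transvection_def row_transvection_def)

lemma col_row_transvection_inverse:
  assumes "n 0 = 0" "w 0 = 0"
  shows "col_transvection k n * row_transvection k (\<lambda>j. - w j)
    * (row_transvection k w * col_transvection k (\<lambda>i. - n i)) = (1\<^sub>m k :: 'a::comm_ring_1 mat)"
proof -
  have "col_transvection k n * row_transvection k (\<lambda>j. - w j)
      * (row_transvection k w * col_transvection k (\<lambda>i. - n i))
    = col_transvection k n * (row_transvection k (\<lambda>j. - w j) * row_transvection k w)
      * col_transvection k (\<lambda>i. - n i)"
    by (simp add: assoc_mult_mat[of _ k k _ k _ k] mult_carrier_mat[of _ k k])
  then show ?thesis
    using assms by (simp add: row_transvection_inverse col_transvection_inverse right_mult_one_mat[of _ k k])
qed

lemma det_mat_star_row_col_transvection: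
  assumes "\<And>j. j < k \<Longrightarrow> laurent_poly (w j)" "\<And>i. i < k \<Longrightarrow> laurent_poly (n i)"
    and "w 0 = 0" "n 0 = 0"
  shows "det (mat_star (row_transvection k w * col_transvection k n)) = 1"
proof -
  have "mat_star (row_transvection k w * col_transvection k n)
      = mat_star (col_transvection k n) * mat_star (row_transvection k w)"
    using assms by (intro mat_star_mult) (simp_all add: laurent_mat_col_transvection laurent_mat_row_transvection)
  also have "\<dots> = row_transvection k (\<lambda>j. lstar (n j)) * col_transvection k (\<lambda>i. lstar (w i))"
    using assms by (simp add: mat_star_col_transvection mat_star_row_transvection)
  finally show ?thesis
    using assms by (simp add: det_mult[of _ k] det_col_transvection det_row_transvection)
qed

lemma unit_column_completion:
  fixes m s :: "nat \<Rightarrow> 'a::comm_ring_1" and k :: nat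
  defines "n \<equiv> \<lambda>i. if i = 0 then 0 else m i" and "w \<equiv> \<lambda>j. if j = 0 then 0 else s j"
  defines "M \<equiv> col_transvection k n * row_transvection k (\<lambda>j. - w j)"
  assumes m0: "m 0 = 1" and sm: "(\<Sum>c = 0..<k. s c * m c) = 1"
  shows "\<And>i. i < k \<Longrightarrow> M $$ (i, 0) = m i"
    and "\<And>j. j < k \<Longrightarrow> (\<Sum>c = 0..<k. s c * M $$ (c, j)) = (if j = 0 then 1 else 0)"
proof -
  have M: "M $$ (i, j) = (if i = j then 1 else 0) + (if j = 0 then n i else 0) - m i * w j"
    if "i < k" "j < k" for i j
    unfolding M_def col_row_transvection_index[OF that]
    using m0 by (cases "i = 0") (simp_all add: n_def w_def algebra_simps)
  show col0: "M $$ (i, 0) = m i" if "i < k" for i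
    using that m0 by (simp add: M n_def w_def)
  show "(\<Sum>c = 0..<k. s c * M $$ (c, j)) = (if j = 0 then 1 else 0)" if j: "j < k" for j
  proof (cases "j = 0")
    case True
    have "(\<Sum>c = 0..<k. s c * M $$ (c, j)) = (\<Sum>c = 0..<k. s c * m c)"
      by (rule sum.cong) (simp_all add: True col0)
    then show ?thesis using True sm by simp
  next
    case False
    have "(\<Sum>c = 0..<k. s c * M $$ (c, j)) = (\<Sum>c = 0..<k. (if c = j then s c else 0) - s c * m c * s j)"
      by (rule sum.cong) (auto simp: M j False w_def ring_distribs)
    also have "\<dots> = 0" using j sm by (simp add: sum_subtractf flip: sum_distrib_right)
    finally show ?thesis using False by simp
  qed
qed

lemma laurent_unit_column_completion:
  fixes m s :: "nat \<Rightarrow> complex fls"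
  assumes m: "\<And>i. i < k \<Longrightarrow> laurent_poly (m i)" "m 0 = 1"
    and s: "\<And>j. j < k \<Longrightarrow> laurent_poly (s j)" and sm: "(\<Sum>c = 0..<k. s c * m c) = 1"
  obtains M Mi where "M \<in> carrier_mat k k" "Mi \<in> carrier_mat k k" "laurent_mat M" "laurent_mat Mi"
    "M * Mi = 1\<^sub>m k" "det (mat_star Mi) = 1"
    "\<And>i. i < k \<Longrightarrow> M $$ (i, 0) = m i"
    "\<And>j. j < k \<Longrightarrow> (\<Sum>c = 0..<k. s c * M $$ (c, j)) = (if j = 0 then 1 else 0)"
proof -
  define n where "n = (\<lambda>i. if i = 0 then 0 else m i)"
  define w where "w = (\<lambda>j. if j = 0 then 0 else s j)"
  have n0: "n 0 = 0" and w0: "w 0 = 0" by (simp_all add: n_def w_def)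
  have Ln: "laurent_poly (n i)" "laurent_poly (- n i)" if "i < k" for i
    using m that by (simp_all add: n_def)
  have Lw: "laurent_poly (w j)" "laurent_poly (- w j)" if "j < k" for j
    using s that by (simp_all add: w_def)
  define M where "M = col_transvection k n * row_transvection k (\<lambda>j. - w j)"
  define Mi where "Mi = row_transvection k w * col_transvection k (\<lambda>i. - n i)"
  have "M \<in> carrier_mat k k" "Mi \<in> carrier_mat k k"
    by (simp_all add: M_def Mi_def mult_carrier_mat[of _ k k])
  moreover have "laurent_mat M" "laurent_mat Mi"
    using Ln Lw by (simp_all add: M_def Mi_def laurent_mat_col_transvection laurent_mat_row_transvection)
  moreover have "M * Mi = 1\<^sub>m k"
    unfolding M_def Mi_def using n0 w0 by (rule col_row_transvection_inverse)
  moreover have "det (mat_star Mi) = 1"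
    unfolding Mi_def using Lw Ln n0 w0 by (intro det_mat_star_row_col_transvection) simp_all
  moreover have "M $$ (i, 0) = m i" if "i < k" for i
    unfolding M_def n_def w_def using unit_column_completion(1)[OF m(2) sm that] .
  moreover have "(\<Sum>c = 0..<k. s c * M $$ (c, j)) = (if j = 0 then 1 else 0)" if "j < k" for j
    unfolding M_def n_def w_def using unit_column_completion(2)[OF m(2) sm that] .
  ultimately show thesis by (rule that)
qed

section \<open>Splitting off a unit\<close>

lemma hermite_lmat_congruence:
  assumes R: "R \<in> carrier_mat k k" "laurent_mat R" "hermite_lmat R"
    and M: "M \<in> carrier_mat k n" "laurent_mat M"
  shows "hermite_lmat (mat_star M * R * M)"
proof -
  have "mat_star (mat_star M * R * M) = mat_star M * mat_star (mat_star M * R)"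
    using R M by (intro mat_star_mult) simp_all
  also have "mat_star (mat_star M * R) = mat_star R * M"
    using R M by (subst mat_star_mult) simp_all
  finally show ?thesis
    using R M by (simp add: hermite_lmat_def assoc_mult_mat[of _ n k _ k _ n])
qed

lemma hermite_lmat_unit_first_row_block:
  assumes B: "B \<in> carrier_mat k k" "laurent_mat B" "hermite_lmat B" and k: "0 < k"
    and row0: "\<And>j. j < k \<Longrightarrow> B $$ (0, j) = (if j = 0 then 1 else 0)"
  obtains Bt where "Bt \<in> carrier_mat (k - 1) (k - 1)" "laurent_mat Bt"
    "B = four_block_mat (1\<^sub>m 1) (0\<^sub>m 1 (k - 1)) (0\<^sub>m (k - 1) 1) Bt"
proof
  define Bt where "Bt = mat (k - 1) (k - 1) (\<lambda>(i, j). B $$ (Suc i, Suc j))"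
  show "Bt \<in> carrier_mat (k - 1) (k - 1)" by (simp add: Bt_def)
  show "laurent_mat Bt"
    by (rule laurent_matI) (use B in \<open>auto simp: Bt_def intro!: laurent_matD\<close>)
  have col0: "B $$ (i, 0) = 0" if "0 < i" "i < k" for i
  proof -
    have "B $$ (i, 0) = lstar (B $$ (0, i))" using hermite_lmat_index[OF B(3,1) k that(2)] by simp
    then show ?thesis using row0 that by simp
  qed
  show "B = four_block_mat (1\<^sub>m 1) (0\<^sub>m 1 (k - 1)) (0\<^sub>m (k - 1) 1) Bt"
    by (rule eq_matI) (use B k row0 col0 in \<open>auto simp: Bt_def\<close>)
qed

lemma inverse_of_hermite_represents_one:
  assumes Q: "Q \<in> carrier_mat k k" "laurent_mat Q" "hermite_lmat Q" "Q $$ (0, 0) = 0"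
    and R: "R \<in> carrier_mat k k" "laurent_mat R" "hermite_lmat R"
    and QR: "Q * R = 1\<^sub>m k" "R * Q = 1\<^sub>m k" and k: "0 < k"
  obtains m where "\<And>i. i < k \<Longrightarrow> laurent_poly (m i)" "m 0 = 1"
    "(\<Sum>c = 0..<k. (\<Sum>a = 0..<k. lstar (m a) * R $$ (a, c)) * m c) = 1"
proof -
  have LQ: "laurent_poly (Q $$ (i, j))" and LR: "laurent_poly (R $$ (i, j))"
    if "i < k" "j < k" for i j
    using Q R that by (auto intro: laurent_matD)
  note HQ = hermite_lmat_index[OF Q(3,1)]
  define \<rho> where "\<rho> = R $$ (0, 0)"
  have L\<rho>: "laurent_poly \<rho>" using LR k by (simp add: \<rho>_def)
  have H\<rho>: "lstar \<rho> = \<rho>" using hermite_lmat_index[OF R(3,1) k k] by (simp add: \<rho>_def)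
  define t where "t = fls_const (1 / 2) * (1 - \<rho>)"
  have Lt: "laurent_poly t" and Ht: "lstar t = t" using L\<rho> H\<rho> by (simp_all add: t_def)
  have t2: "t + t = 1 - \<rho>" by (simp add: t_def fls_plus_const flip: distrib_right)
  define m where "m a = (if a = 0 then 1 else 0) + t * Q $$ (a, 0)" for a
  have Lm: "laurent_poly (m a)" if "a < k" for a using that Lt LQ k by (simp add: m_def)
  have Hm: "lstar (m a) = (if a = 0 then 1 else 0) + t * Q $$ (0, a)" if "a < k" for a
    using that k Lt LQ Ht HQ by (simp add: m_def)
  note QR0 = mult_eq_one_mat_index[OF QR(1) Q(1) R(1) k]
  have RQ0: "(\<Sum>a = 0..<k. R $$ (0, a) * Q $$ (a, 0)) = 1"
    using mult_eq_one_mat_index[OF QR(2) R(1) Q(1) k k] by simp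
  have mR: "(\<Sum>a = 0..<k. lstar (m a) * R $$ (a, c)) = R $$ (0, c) + (if c = 0 then t else 0)"
    if c: "c < k" for c
  proof -
    have "(\<Sum>a = 0..<k. lstar (m a) * R $$ (a, c))
        = (\<Sum>a = 0..<k. (if a = 0 then R $$ (a, c) else 0) + t * (Q $$ (0, a) * R $$ (a, c)))"
      by (rule sum.cong) (auto simp: Hm ring_distribs)
    also have "\<dots> = R $$ (0, c) + t * (\<Sum>a = 0..<k. Q $$ (0, a) * R $$ (a, c))"
      using k by (simp add: sum.distrib sum_distrib_left)
    finally show ?thesis using QR0[OF c] by (simp add: eq_commute[of 0 c])
  qed
  have "(\<Sum>c = 0..<k. (\<Sum>a = 0..<k. lstar (m a) * R $$ (a, c)) * m c)
      = (\<Sum>c = 0..<k. (R $$ (0, c) + (if c = 0 then t else 0)) * m c)"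
    by (rule sum.cong) (simp_all add: mR)
  also have "\<dots> = (\<Sum>c = 0..<k. (if c = 0 then R $$ (c, c) + t + t * t * Q $$ (c, 0) else 0)
      + t * (R $$ (0, c) * Q $$ (c, 0)))"
    by (rule sum.cong) (auto simp: m_def ring_distribs)
  also have "\<dots> = \<rho> + t + t * (\<Sum>c = 0..<k. R $$ (0, c) * Q $$ (c, 0))"
    using k Q(4) by (simp add: sum.distrib sum_distrib_left \<rho>_def)
  also have "\<dots> = 1" using RQ0 t2 by simp
  finally show thesis using Lm by (intro that) (simp_all add: m_def Q(4))
qed

lemma congruence_first_row:
  assumes "R \<in> carrier_mat k k" "M \<in> carrier_mat k n" "0 < k" "j < n"
  shows "(mat_star M * R * M) $$ (0, j)
    = (\<Sum>c = 0..<k. (\<Sum>a = 0..<k. lstar (M $$ (a, 0)) * R $$ (a, c)) * M $$ (c, j))"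
  using assms by (simp add: scalar_prod_def)

lemma hermite_lmat_split_off_unit:
  assumes R: "R \<in> carrier_mat k k" "laurent_mat R" "hermite_lmat R" and k: "0 < k"
    and m: "\<And>i. i < k \<Longrightarrow> laurent_poly (m i)" "m 0 = 1"
    and mRm: "(\<Sum>c = 0..<k. (\<Sum>a = 0..<k. lstar (m a) * R $$ (a, c)) * m c) = 1"
  obtains M Mi Rt where "M \<in> carrier_mat k k" "Mi \<in> carrier_mat k k"
    "laurent_mat M" "laurent_mat Mi" "M * Mi = 1\<^sub>m k" "det (mat_star Mi) = 1"
    "Rt \<in> carrier_mat (k - 1) (k - 1)" "laurent_mat Rt"
    "mat_star M * R * M = four_block_mat (1\<^sub>m 1) (0\<^sub>m 1 (k - 1)) (0\<^sub>m (k - 1) 1) Rt"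
proof -
  define s where "s c = (\<Sum>a = 0..<k. lstar (m a) * R $$ (a, c))" for c
  have Ls: "laurent_poly (s c)" if "c < k" for c
    using m R that by (auto simp: s_def intro!: laurent_poly_sum laurent_poly_mult laurent_matD)
  have sm: "(\<Sum>c = 0..<k. s c * m c) = 1" using mRm by (simp add: s_def)
  obtain M Mi where M: "M \<in> carrier_mat k k" "Mi \<in> carrier_mat k k"
      "laurent_mat M" "laurent_mat Mi" "M * Mi = 1\<^sub>m k" "det (mat_star Mi) = 1"
    and col0: "\<And>i. i < k \<Longrightarrow> M $$ (i, 0) = m i"
    and row0: "\<And>j. j < k \<Longrightarrow> (\<Sum>c = 0..<k. s c * M $$ (c, j)) = (if j = 0 then 1 else 0)"
    using laurent_unit_column_completion[where k = k and m = m and s = s, OF m Ls sm] by blast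
  define B where "B = mat_star M * R * M"
  have B: "B \<in> carrier_mat k k" "laurent_mat B" "hermite_lmat B"
    using R M carrier_matD[OF R(1)] carrier_matD[OF M(1)] hermite_lmat_congruence[OF R M(1,3)]
    by (simp_all add: B_def mult_carrier_mat[of _ k k])
  have sM: "(\<Sum>a = 0..<k. lstar (M $$ (a, 0)) * R $$ (a, c)) = s c" for c
    unfolding s_def by (rule sum.cong) (simp_all add: col0)
  have "B $$ (0, j) = (if j = 0 then 1 else 0)" if "j < k" for j
    using congruence_first_row[OF R(1) M(1) k that] row0[OF that] by (simp add: B_def sM)
  with hermite_lmat_unit_first_row_block[OF B k] obtain Rt where
    "Rt \<in> carrier_mat (k - 1) (k - 1)" "laurent_mat Rt"
    "B = four_block_mat (1\<^sub>m 1) (0\<^sub>m 1 (k - 1)) (0\<^sub>m (k - 1) 1) Rt"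
    by blast
  with M show thesis by (intro that) (simp_all add: B_def)
qed

lemma congruence_cancel_inverse:
  assumes Q: "Q \<in> carrier_mat k k" "laurent_mat Q" "hermite_lmat Q"
    and R: "R \<in> carrier_mat k k" and RQ: "R * Q = 1\<^sub>m k"
    and M: "M \<in> carrier_mat k k" "Mi \<in> carrier_mat k k" "laurent_mat M" "laurent_mat Mi"
    and MMi: "M * Mi = 1\<^sub>m k"
  shows "Q * mat_star Mi * (mat_star M * R * M) * mat_star (Q * mat_star Mi) = Q"
proof -
  have "mat_star (Q * mat_star Mi) = Mi * Q"
    using Q M by (simp add: mat_star_mult hermite_lmat_def)
  moreover have "mat_star Mi * mat_star M = 1\<^sub>m k"
    using M MMi mat_star_mult[of M Mi] by simp
  moreover have "Q * mat_star Mi * (mat_star M * R * M) * (Mi * Q)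
      = Q * (mat_star Mi * mat_star M) * R * (M * Mi) * Q"
    using Q R M by (simp add: assoc_mult_mat[of _ k k _ k _ k] mult_carrier_mat[of _ k k])
  ultimately show ?thesis
    using Q R RQ MMi by (simp add: assoc_mult_mat[of _ k k _ k _ k] right_mult_one_mat[of _ k k])
qed

theorem lemma4p3:
  fixes Q :: "complex fls mat" and k :: nat
  assumes "k \<ge> 2"
    and "Q \<in> carrier_mat k k"
    and "unimodular_lmat Q"
    and "hermite_lmat Q"
    and "Q $$ (0, 0) = 0"
  shows "\<exists>U Qt. U \<in> carrier_mat k k \<and> unimodular_lmat U \<and>
           Qt \<in> carrier_mat (k - 1) (k - 1) \<and> laurent_mat Qt \<and>
           Q = U * four_block_mat (1\<^sub>m 1) (0\<^sub>m 1 (k - 1)) (0\<^sub>m (k - 1) 1) Qt * mat_star U"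
proof -
  have k: "0 < k" using assms(1) by simp
  have Q: "Q \<in> carrier_mat k k" "laurent_mat Q" "hermite_lmat Q"
    using assms(2-4) by (simp_all add: unimodular_lmat_def)
  obtain R where R: "R \<in> carrier_mat k k" "laurent_mat R" and QR: "Q * R = 1\<^sub>m k" "R * Q = 1\<^sub>m k"
    using unimodular_lmat_inverse[OF assms(2,3)] .
  have HR: "hermite_lmat R" using hermite_lmat_inverse[OF Q R QR(1)] .
  obtain m where m: "\<And>i. i < k \<Longrightarrow> laurent_poly (m i)" "m 0 = 1"
    and mRm: "(\<Sum>c = 0..<k. (\<Sum>a = 0..<k. lstar (m a) * R $$ (a, c)) * m c) = 1"
    using inverse_of_hermite_represents_one[OF Q assms(5) R HR QR k] by blast
  obtain M Mi Qt where M: "M \<in> carrier_mat k k" "Mi \<in> carrier_mat k k" "laurent_mat M" "laurent_mat Mi"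
      "M * Mi = 1\<^sub>m k" and detMi: "det (mat_star Mi) = 1"
    and Qt: "Qt \<in> carrier_mat (k - 1) (k - 1)" "laurent_mat Qt"
    and split: "mat_star M * R * M = four_block_mat (1\<^sub>m 1) (0\<^sub>m 1 (k - 1)) (0\<^sub>m (k - 1) 1) Qt"
    using hermite_lmat_split_off_unit[OF R HR k m mRm] by blast
  define U where "U = Q * mat_star Mi"
  have "Q = U * four_block_mat (1\<^sub>m 1) (0\<^sub>m 1 (k - 1)) (0\<^sub>m (k - 1) 1) Qt * mat_star U"
    using congruence_cancel_inverse[OF Q R(1) QR(2) M] by (simp add: U_def split)
  moreover have "U \<in> carrier_mat k k" "unimodular_lmat U"
    using assms(3) Q M det_mult[of Q k "mat_star Mi"] detMi
    by (auto simp: U_def unimodular_lmat_def mult_carrier_mat[of _ k k])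
  ultimately show ?thesis using Qt by blast
qed

end
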